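(* Each of the following three rules produces integers $\mathsf t_i,\mathsf p_i\in\{0,\dots,255\}$ such that the case of $(\mathsf t_i,\mathsf p_i)$ with respect to base $256$ equals the case of $(A_i,B_i)$ with respect to the limb base $b$. (1) Native radix: $b=2^{64}$, $0\le A_i,B_i<2^{64}$, $D_i=(A_i+B_i)\bmod 2^{64}$, $G_i=\mathrm{popcnt}(D_i)$, $m_i=1$ if $D_i<A_i$ and $m_i=0$ otherwise, $\mathsf t_i=G_i+65m_i$, $\mathsf p_i=191$. (2) Reduced radix $2^k$ (first rule): $1\le k\le 63$, $b=2^k$, $0\le A_i,B_i<2^k$, $D_i=A_i+B_i$, $G_i=\mathrm{popcnt}(D_i)$, $m_i=1$ if $D_i\ge 2^k$ and $m_i=0$ otherwise, $\mathsf t_i=G_i+65m_i$, $\mathsf p_i=255-k$. (3) Reduced radix $2^k$ (second rule): $1\le k\le 63$, $b=2^k$, $0\le A_i,B_i<2^k$, $D_i=A_i+B_i$, $G_i=\min(D_i+2^{64}-2^k-1,\,2^{64}-1)$, $\mathsf t_i=\max(G_i-(2^{64}-3),\,0)$, $\mathsf p_i=254$.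
   Context: $\mathrm{popcnt}(x)$ is the number of ones in the binary representation of the nonnegative integer $x$. For a base $b\ge2$ and integers $0\le x,y<b$, the case of $(x,y)$ with respect to base $b$ is $\mathbf N$ if $x+y\le b-2$, $\mathbf P$ if $x+y=b-1$, and $\mathbf G$ if $x+y\ge b$. *)

theory Defs
  imports Main
begin

fun popcnt :: "nat \<Rightarrow> nat" where
  "popcnt n = (if n = 0 then 0 else n mod 2 + popcnt (n div 2))"

datatype addcase = CaseN | CaseP | CaseG

text \<open>Case of (x,y) with respect to base b (intended for b >= 2, 0 <= x,y < b).\<close>
definition case_of :: "int \<Rightarrow> int \<Rightarrow> int \<Rightarrow> addcase" where
  "case_of b x y = (if x + y \<le> b - 2 then CaseN
                    else if x + y = b - 1 then CaseP else CaseG)"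

end

theory Submission
  imports Defs
begin

text \<open>In the carry-flag rules a carry pushes \<open>t\<close> to at least 65, past the threshold
  \<open>255 - w\<close> for every limb width \<open>w \<le> 64\<close>.  Without a carry the limb sum is below \<open>2^w\<close>,
  so its popcount is at most \<open>w\<close>, with equality exactly for the all-ones limb \<open>2^w - 1\<close>:
  the propagate case.  The saturating rule computes \<open>A + B - b + 2\<close> clamped to
  \<open>{0, 1, 2}\<close>, whatever the word size.\<close>

lemma popcnt_0 [simp]: "popcnt 0 = 0"
  by simp

lemma popcnt_rec: "popcnt n = n mod 2 + popcnt (n div 2)"
  by (cases "n = 0") simp_all

declare popcnt.simps [simp del]

lemma popcnt_le_of_less_power: "n < 2 ^ k \<Longrightarrow> popcnt n \<le> k"
proof (induction k arbitrary: n)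
  case (Suc k)
  then have "popcnt (n div 2) \<le> k" by simp
  then show ?case by (subst popcnt_rec) simp
qed simp

lemma popcnt_eq_iff_all_ones: "n < 2 ^ k \<Longrightarrow> popcnt n = k \<longleftrightarrow> n = 2 ^ k - 1"
proof (induction k arbitrary: n)
  case (Suc k)
  have half: "n div 2 < 2 ^ k" using Suc.prems by simp
  have "popcnt n = Suc k \<longleftrightarrow> n mod 2 = 1 \<and> popcnt (n div 2) = k"
    using popcnt_le_of_less_power [OF half] by (subst popcnt_rec) (auto simp: mod2_eq_if)
  also have "\<dots> \<longleftrightarrow> n mod 2 = 1 \<and> n div 2 = 2 ^ k - 1"
    using Suc.IH [OF half] by simp
  also have "\<dots> \<longleftrightarrow> n = 2 * (2 ^ k - 1) + 1"
    by presburger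
  also have "2 * (2 ^ k - 1) + 1 = (2::nat) ^ Suc k - 1"
    using one_le_power [of "2::nat" k] by (simp only: power_Suc) arith
  finally show ?case .
qed simp

lemma add_mod_less_iff_overflow:
  fixes A B M :: nat
  assumes "B < M"
  shows "(A + B) mod M < A \<longleftrightarrow> M \<le> A + B"
proof (cases "M \<le> A + B")
  case True
  then have "(A + B) mod M \<le> A + B - M" by (simp add: le_mod_geq)
  with True assms show ?thesis by linarith
qed simp

lemma case_of_carry_popcnt:
  fixes A B g m w :: nat
  assumes "w \<le> 64" and "g \<le> 64"
    and "m = (if 2 ^ w \<le> A + B then 1 else 0)"
    and "A + B < 2 ^ w \<Longrightarrow> g = popcnt (A + B)"
  shows "case_of 256 (int (g + 65 * m)) (255 - int w) = case_of (2 ^ w) (int A) (int B)"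
proof (cases "2 ^ w \<le> A + B")
  case True
  then have "(2::int) ^ w \<le> int A + int B"
    by (simp flip: of_nat_add add: of_nat_le_numeral_power_cancel_iff)
  with True assms(1,3) show ?thesis by (simp add: case_of_def)
next
  case False
  then have "g \<le> w" and "g = w \<longleftrightarrow> A + B = 2 ^ w - 1"
    using assms(4) popcnt_le_of_less_power popcnt_eq_iff_all_ones by auto
  moreover have "int A + int B < 2 ^ w"
    using False by (simp flip: of_nat_add add: of_nat_less_numeral_power_cancel_iff)
  moreover have "A + B = 2 ^ w - 1 \<longleftrightarrow> int A + int B = 2 ^ w - 1"
  proof -
    have "int (2 ^ w - 1) = 2 ^ w - 1" by (simp add: of_nat_diff)
    then show ?thesis by (metis of_nat_add of_nat_eq_iff)
  qed
  ultimately show ?thesis using False assms(3) by (auto simp: case_of_def)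
qed

lemma case_of_saturating:
  fixes x y b M :: int
  shows "let t = max (min (x + y + M - b - 1) (M - 1) - (M - 3)) 0
         in 0 \<le> t \<and> t \<le> 2 \<and> case_of 256 t 254 = case_of b x y"
  by (simp add: Let_def case_of_def min_def max_def)

lemma native_radix_rule:
  fixes A B :: nat
  assumes "A < 2^64" and "B < 2^64"
  shows "let D = (A + B) mod 2^64; G = popcnt D; m = (if D < A then 1 else 0 :: nat);
           t = int (G + 65 * m); p = (191 :: int)
         in 0 \<le> t \<and> t \<le> 255 \<and> 0 \<le> p \<and> p \<le> 255 \<and>
            case_of 256 t p = case_of (2^64) (int A) (int B)"
proof -
  define D where "D = (A + B) mod 2^64"
  have bound: "popcnt D \<le> 64"
    using popcnt_le_of_less_power by (simp add: D_def)
  have "case_of 256 (int (popcnt D + 65 * (if D < A then 1 else 0))) (255 - int 64)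
      = case_of (2^64) (int A) (int B)"
  proof (rule case_of_carry_popcnt)
    show "(if D < A then 1 else 0) = (if 2^64 \<le> A + B then 1 else 0 :: nat)"
      using add_mod_less_iff_overflow \<open>B < 2^64\<close> by (simp add: D_def)
  qed (use bound in \<open>simp_all add: D_def\<close>)
  with bound show ?thesis
    unfolding Let_def D_def [symmetric] by simp
qed

lemma reduced_radix_popcnt_rule:
  fixes k A B :: nat
  assumes "k \<le> 63" and "A < 2^k" and "B < 2^k"
  shows "let D = A + B; G = popcnt D; m = (if D \<ge> 2^k then 1 else 0 :: nat);
           t = int (G + 65 * m); p = 255 - int k
         in 0 \<le> t \<and> t \<le> 255 \<and> 0 \<le> p \<and> p \<le> 255 \<and>
            case_of 256 t p = case_of (2^k) (int A) (int B)"
proof -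
  have bound: "popcnt (A + B) \<le> 64"
    using assms popcnt_le_of_less_power [of "A + B" "Suc k"] by simp
  have "case_of 256 (int (popcnt (A + B) + 65 * (if A + B \<ge> 2^k then 1 else 0))) (255 - int k)
      = case_of (2^k) (int A) (int B)"
    using assms bound by (intro case_of_carry_popcnt) simp_all
  with bound \<open>k \<le> 63\<close> show ?thesis
    by (simp add: Let_def)
qed

lemma reduced_radix_saturating_rule:
  fixes k A B :: nat
  shows "let D = int A + int B; G = min (D + 2^64 - 2^k - 1) (2^64 - 1);
           t = max (G - (2^64 - 3)) 0; p = (254 :: int)
         in 0 \<le> t \<and> t \<le> 255 \<and> 0 \<le> p \<and> p \<le> 255 \<and>
            case_of 256 t p = case_of (2^k) (int A) (int B)"
  using case_of_saturating [of "int A" "int B" "2^64" "2^k"]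
  unfolding Let_def by (elim conjE, intro conjI) (assumption | linarith)+

theorem lemma1:
  shows
  "(\<forall>A B :: nat. A < 2^64 \<and> B < 2^64 \<longrightarrow>
      (let D = (A + B) mod 2^64; G = popcnt D; m = (if D < A then 1 else 0 :: nat);
           t = int (G + 65 * m); p = (191 :: int)
       in 0 \<le> t \<and> t \<le> 255 \<and> 0 \<le> p \<and> p \<le> 255 \<and>
          case_of 256 t p = case_of (2^64) (int A) (int B)))
   \<and> (\<forall>k A B :: nat. 1 \<le> k \<and> k \<le> 63 \<and> A < 2^k \<and> B < 2^k \<longrightarrow>
      (let D = A + B; G = popcnt D; m = (if D \<ge> 2^k then 1 else 0 :: nat);
           t = int (G + 65 * m); p = 255 - int k
       in 0 \<le> t \<and> t \<le> 255 \<and> 0 \<le> p \<and> p \<le> 255 \<and>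
          case_of 256 t p = case_of (2^k) (int A) (int B)))
   \<and> (\<forall>k A B :: nat. 1 \<le> k \<and> k \<le> 63 \<and> A < 2^k \<and> B < 2^k \<longrightarrow>
      (let D = int A + int B; G = min (D + 2^64 - 2^k - 1) (2^64 - 1);
           t = max (G - (2^64 - 3)) 0; p = (254 :: int)
       in 0 \<le> t \<and> t \<le> 255 \<and> 0 \<le> p \<and> p \<le> 255 \<and>
          case_of 256 t p = case_of (2^k) (int A) (int B)))"
  by (blast intro: native_radix_rule reduced_radix_popcnt_rule reduced_radix_saturating_rule)

end
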